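(* Let $S_n$ act on $V=\mathbb{C}^n$ by its natural permutation representation, and let $\alpha,\beta$ be $S_n$-invariant $2$-cochains with $\beta$ linear and $\alpha$ linear or constant. Let $g\in S_n$ have a factorization $g=xy$, let $K=Z(x)\cap Z(y)$, and let $H$ be a subgroup of $Z(g)$ normalized by $K$. Let $\mathcal{B}$ be the set of all three-element subsets of $\{e_1,\dots,e_n\}$ and $\mathcal{B}_H$ a set of representatives of the $H$-orbits on $\mathcal{B}$. If $$\sum_{(x',y')\in{}^{H}(x,y)}\phi_{x',y'}(e_i,e_j,e_k)=0\quad\text{for all }\{e_i,e_j,e_k\}\in\mathcal{B}_H,$$ then $$\sum_{(x',y')\in{}^{Z(g)}(x,y)}\phi_{x',y'}(e_i,e_j,e_k)=0\quad\text{for all }\{e_i,e_j,e_k\}\in\mathcal{B}.$$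
   Context: $S_n$ acts by $\sigma e_i=e_{\sigma(i)}$. A linear (resp. constant) 2-cochain is $\alpha=\sum_g\alpha_gg$ with $\alpha_g:\bigwedge^2V\to V$ (resp. $\to\mathbb{C}$); it is $S_n$-invariant if $h(\alpha_g(v,w))=\alpha_{hgh^{-1}}(hv,hw)$. For $x,y\in S_n$, $\phi_{x,y}(v_1,v_2,v_3)=\alpha_x(v_1+yv_1,\beta_y(v_2,v_3))+\alpha_x(v_2+yv_2,\beta_y(v_3,v_1))+\alpha_x(v_3+yv_3,\beta_y(v_1,v_2))$, an alternating trilinear map. $Z(\cdot)$ is the centralizer; for $S\subseteq S_n$, ${}^{S}(x,y)=\{(sxs^{-1},sys^{-1}):s\in S\}$. *)

theory Defs
  imports "HOL-Analysis.Analysis"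
begin

text \<open>S_n is the group of permutations of the finite index type 'n (so n = CARD('n)),
  acting on V = complex^'n by sigma e_i = e_(sigma i); group product is composition.\<close>

definition Sn :: "('n::finite \<Rightarrow> 'n) set" where
  "Sn = {s. s permutes (UNIV :: 'n set)}"

definition pact :: "('n::finite \<Rightarrow> 'n) \<Rightarrow> complex ^ 'n \<Rightarrow> complex ^ 'n" where
  "pact s v = (\<chi> j. v $ (inv s j))"

definition basis_vec :: "'n::finite \<Rightarrow> complex ^ 'n" where
  "basis_vec i = axis i 1"

definition cochain2 ::
  "(complex \<Rightarrow> 'w::ab_group_add \<Rightarrow> 'w) \<Rightarrow> (('n::finite \<Rightarrow> 'n) \<Rightarrow> complex^'n \<Rightarrow> complex^'n \<Rightarrow> 'w) \<Rightarrow> bool" where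
  "cochain2 sm a \<longleftrightarrow> (\<forall>g\<in>Sn.
      (\<forall>u v w. a g (u + v) w = a g u w + a g v w) \<and>
      (\<forall>c v w. a g (c *s v) w = sm c (a g v w)) \<and>
      (\<forall>v. a g v v = 0))"

definition invariant2 ::
  "(('n::finite \<Rightarrow> 'n) \<Rightarrow> 'w \<Rightarrow> 'w) \<Rightarrow> (('n \<Rightarrow> 'n) \<Rightarrow> complex^'n \<Rightarrow> complex^'n \<Rightarrow> 'w) \<Rightarrow> bool" where
  "invariant2 act a \<longleftrightarrow> (\<forall>h\<in>Sn. \<forall>g\<in>Sn. \<forall>v w.
      act h (a g v w) = a (h \<circ> g \<circ> inv h) (pact h v) (pact h w))"

definition linear_cochain :: "(('n::finite \<Rightarrow> 'n) \<Rightarrow> complex^'n \<Rightarrow> complex^'n \<Rightarrow> complex^'n) \<Rightarrow> bool" where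
  "linear_cochain a \<longleftrightarrow> cochain2 (*s) a"

definition const_cochain :: "(('n::finite \<Rightarrow> 'n) \<Rightarrow> complex^'n \<Rightarrow> complex^'n \<Rightarrow> complex) \<Rightarrow> bool" where
  "const_cochain a \<longleftrightarrow> cochain2 (*) a"

definition invariant_linear :: "(('n::finite \<Rightarrow> 'n) \<Rightarrow> complex^'n \<Rightarrow> complex^'n \<Rightarrow> complex^'n) \<Rightarrow> bool" where
  "invariant_linear a \<longleftrightarrow> invariant2 pact a"

definition invariant_const :: "(('n::finite \<Rightarrow> 'n) \<Rightarrow> complex^'n \<Rightarrow> complex^'n \<Rightarrow> complex) \<Rightarrow> bool" where
  "invariant_const a \<longleftrightarrow> invariant2 (\<lambda>h z. z) a"

definition phi ::
  "(('n::finite \<Rightarrow> 'n) \<Rightarrow> complex^'n \<Rightarrow> complex^'n \<Rightarrow> 'w::ab_group_add) \<Rightarrow>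
   (('n \<Rightarrow> 'n) \<Rightarrow> complex^'n \<Rightarrow> complex^'n \<Rightarrow> complex^'n) \<Rightarrow>
   ('n \<Rightarrow> 'n) \<Rightarrow> ('n \<Rightarrow> 'n) \<Rightarrow> complex^'n \<Rightarrow> complex^'n \<Rightarrow> complex^'n \<Rightarrow> 'w" where
  "phi a b x y v1 v2 v3 =
     a x (v1 + pact y v1) (b y v2 v3) + a x (v2 + pact y v2) (b y v3 v1) + a x (v3 + pact y v3) (b y v1 v2)"

definition centralizer :: "('n::finite \<Rightarrow> 'n) \<Rightarrow> ('n \<Rightarrow> 'n) set" where
  "centralizer x = {s \<in> Sn. s \<circ> x = x \<circ> s}"

definition conj_pairs :: "('n::finite \<Rightarrow> 'n) set \<Rightarrow> ('n \<Rightarrow> 'n) \<Rightarrow> ('n \<Rightarrow> 'n) \<Rightarrow> (('n \<Rightarrow> 'n) \<times> ('n \<Rightarrow> 'n)) set" where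
  "conj_pairs S x y = {(s \<circ> x \<circ> inv s, s \<circ> y \<circ> inv s) | s. s \<in> S}"

definition orbit_sum ::
  "(('n::finite \<Rightarrow> 'n) \<Rightarrow> complex^'n \<Rightarrow> complex^'n \<Rightarrow> 'w::ab_group_add) \<Rightarrow>
   (('n \<Rightarrow> 'n) \<Rightarrow> complex^'n \<Rightarrow> complex^'n \<Rightarrow> complex^'n) \<Rightarrow>
   ('n \<Rightarrow> 'n) set \<Rightarrow> ('n \<Rightarrow> 'n) \<Rightarrow> ('n \<Rightarrow> 'n) \<Rightarrow> 'n \<Rightarrow> 'n \<Rightarrow> 'n \<Rightarrow> 'w" where
  "orbit_sum a b S x y i j k =
     (\<Sum>(x', y') \<in> conj_pairs S x y. phi a b x' y' (basis_vec i) (basis_vec j) (basis_vec k))"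

definition is_subgroup_Sn :: "('n::finite \<Rightarrow> 'n) set \<Rightarrow> bool" where
  "is_subgroup_Sn H \<longleftrightarrow> H \<subseteq> Sn \<and> id \<in> H \<and> (\<forall>a\<in>H. \<forall>b\<in>H. a \<circ> b \<in> H) \<and> (\<forall>a\<in>H. inv a \<in> H)"

text \<open>B: 3-element subsets of the basis, identified with 3-element index sets.\<close>
definition triples :: "'n::finite set set" where
  "triples = {T. card T = 3}"

definition orbit_reps :: "('n::finite \<Rightarrow> 'n) set \<Rightarrow> 'n set set \<Rightarrow> bool" where
  "orbit_reps H R \<longleftrightarrow> R \<subseteq> triples \<and> (\<forall>T\<in>triples. \<exists>!r. r \<in> R \<and> (\<exists>h\<in>H. T = h ` r))"

end

theory Submission
  imports Defs
begin

text \<open>Summing over all u \<in> G instead of over the orbit of (x, y) under conjugation by G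
  multiplies an orbit sum by the order of the stabiliser, so the two vanish together.  Equivariance
  of \<phi> lets a permutation t be pulled out of such a group-indexed sum: translating the index set
  by t moves the triple (a, b, c) to (t a, t b, t c) and applies t to the value.  Hence the
  hypothesis on the representatives makes the H-sum vanish at every triple, and splitting Z(g)
  into left cosets u H exhibits |H| times the Z(g)-sum as a sum of translates of H-sums.
  Only H \<subseteq> Z(g) is used: neither g = x y, nor the normalisation of H by Z(x) \<inter> Z(y), nor the
  cochain axioms play a role.\<close>

lemma Sn_inverses:
  assumes "s \<in> Sn"
  shows "s \<circ> inv s = id" "inv s \<circ> s = id" "s (inv s a) = a" "inv s (s a) = a"
    "inv (inv s) = s" "bij s"
  using assms
  by (simp_all add: Sn_def permutes_inv_o permutes_inverses permutes_inv_inv permutes_bij)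

lemma inj_Sn_compose:
  assumes "s \<in> Sn"
  shows "inj ((\<circ>) s)"
proof (rule injI)
  fix u v assume "s \<circ> u = s \<circ> v"
  then have "inv s \<circ> s \<circ> u = inv s \<circ> s \<circ> v"
    by (simp add: o_assoc[symmetric])
  then show "u = v"
    by (simp add: Sn_inverses(2)[OF assms])
qed

lemma Sn_compose: "s \<in> Sn \<Longrightarrow> t \<in> Sn \<Longrightarrow> s \<circ> t \<in> Sn"
  by (simp add: Sn_def permutes_compose)

lemma Sn_inv: "s \<in> Sn \<Longrightarrow> inv s \<in> Sn"
  by (simp add: Sn_def permutes_inv)

lemma Sn_conj: "s \<in> Sn \<Longrightarrow> z \<in> Sn \<Longrightarrow> s \<circ> z \<circ> inv s \<in> Sn"
  by (simp add: Sn_compose Sn_inv)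

lemma conj_compose:
  "s \<in> Sn \<Longrightarrow> t \<in> Sn \<Longrightarrow> (s \<circ> t) \<circ> z \<circ> inv (s \<circ> t) = s \<circ> (t \<circ> z \<circ> inv t) \<circ> inv s"
  by (simp add: o_inv_distrib Sn_inverses(6) o_assoc)

lemma pact_compose: "s \<in> Sn \<Longrightarrow> t \<in> Sn \<Longrightarrow> pact s (pact t v) = pact (s \<circ> t) v"
  by (simp add: pact_def vec_eq_iff o_inv_distrib Sn_inverses(6))

lemma additive_pact: "Modules.additive (pact s)"
  by unfold_locales (simp add: pact_def vec_eq_iff)

lemma pact_basis_vec: "s \<in> Sn \<Longrightarrow> pact s (basis_vec i) = basis_vec (s i)"
  by (auto simp: pact_def vec_eq_iff basis_vec_def axis_def Sn_inverses(3,4))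

lemma phi_conj:
  fixes \<alpha> :: "('n::finite \<Rightarrow> 'n) \<Rightarrow> complex^'n \<Rightarrow> complex^'n \<Rightarrow> 'w::ab_group_add"
  assumes \<alpha>: "invariant2 act \<alpha>" and \<beta>: "invariant_linear \<beta>" and act: "Modules.additive (act t)"
    and t: "t \<in> Sn" and x: "x \<in> Sn" and y: "y \<in> Sn"
  shows "phi \<alpha> \<beta> (t \<circ> x \<circ> inv t) (t \<circ> y \<circ> inv t) (pact t v1) (pact t v2) (pact t v3)
       = act t (phi \<alpha> \<beta> x y v1 v2 v3)"
proof -
  have pact_y: "pact (t \<circ> y \<circ> inv t) (pact t v) = pact t (pact y v)" for v
  proof -
    have "(t \<circ> y \<circ> inv t) \<circ> t = t \<circ> y"
      by (simp add: o_assoc[symmetric] Sn_inverses(2)[OF t])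
    then show ?thesis
      using t y by (simp add: pact_compose Sn_conj)
  qed
  have \<beta>_conj: "\<beta> (t \<circ> y \<circ> inv t) (pact t v) (pact t w) = pact t (\<beta> y v w)" for v w
    using \<beta> t y unfolding invariant_linear_def invariant2_def by metis
  have \<alpha>_conj: "\<alpha> (t \<circ> x \<circ> inv t) (pact t v) (pact t w) = act t (\<alpha> x v w)" for v w
    using \<alpha> t x unfolding invariant2_def by metis
  show ?thesis
    unfolding phi_def pact_y \<beta>_conj Modules.additive.add[OF additive_pact, symmetric] \<alpha>_conj
      Modules.additive.add[OF act] ..
qed

lemma centralizer_subgroup: "is_subgroup_Sn (centralizer g)"
proof -
  have "inv s \<circ> g = g \<circ> inv s" if s: "s \<in> Sn" and sg: "s \<circ> g = g \<circ> s" for s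
  proof -
    have "inv s \<circ> g = inv s \<circ> (g \<circ> s) \<circ> inv s"
      by (simp add: o_assoc[symmetric] Sn_inverses(1)[OF s])
    also have "\<dots> = g \<circ> inv s"
      by (simp add: sg[symmetric] o_assoc Sn_inverses(2)[OF s])
    finally show ?thesis .
  qed
  moreover have "s \<circ> t \<circ> g = g \<circ> (s \<circ> t)" if "s \<circ> g = g \<circ> s" "t \<circ> g = g \<circ> t" for s t
    by (metis that o_assoc)
  ultimately show ?thesis
    by (auto simp: is_subgroup_Sn_def centralizer_def Sn_compose Sn_inv)
      (simp add: Sn_def)
qed

lemma subgroup_translate_bij:
  assumes G: "is_subgroup_Sn G" and s: "s \<in> G"
  shows "bij_betw ((\<circ>) s) G G" "bij_betw (\<lambda>u. u \<circ> s) G G"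
proof -
  have sS: "s \<in> Sn" using G s by (auto simp: is_subgroup_Sn_def)
  show "bij_betw ((\<circ>) s) G G"
    by (rule bij_betw_byWitness[where f'="(\<circ>) (inv s)"])
      (use G s in \<open>auto simp: is_subgroup_Sn_def o_assoc[symmetric] Sn_inverses[OF sS]\<close>)
  show "bij_betw (\<lambda>u. u \<circ> s) G G"
    by (rule bij_betw_byWitness[where f'="\<lambda>u. u \<circ> inv s"])
      (use G s in \<open>auto simp: is_subgroup_Sn_def o_assoc Sn_inverses[OF sS]\<close>)
qed

lemma sum_subgroup_cosets:
  fixes F :: "('n::finite \<Rightarrow> 'n) \<Rightarrow> 'w::real_vector"
  assumes G: "is_subgroup_Sn G" and H: "is_subgroup_Sn H" and HG: "H \<subseteq> G"
  shows "real (card H) *\<^sub>R (\<Sum>z\<in>G. F z) = (\<Sum>u\<in>G. \<Sum>h\<in>H. F (u \<circ> h))"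
proof -
  have "(\<Sum>z\<in>G. F z) = (\<Sum>u\<in>G. F (u \<circ> h))" if "h \<in> H" for h
    using sum.reindex_bij_betw[OF subgroup_translate_bij(2)[OF G], of h F] that HG by auto
  then have "real (card H) *\<^sub>R (\<Sum>z\<in>G. F z) = (\<Sum>h\<in>H. \<Sum>u\<in>G. F (u \<circ> h))"
    by (simp add: sum_constant_scaleR[symmetric])
  also have "\<dots> = (\<Sum>u\<in>G. \<Sum>h\<in>H. F (u \<circ> h))"
    by (rule sum.swap)
  finally show ?thesis .
qed

lemma sum_image_constant_fibres:
  fixes F :: "'b \<Rightarrow> 'w::real_vector"
  assumes "finite A" and fibres: "\<And>a. a \<in> A \<Longrightarrow> card {a' \<in> A. f a' = f a} = m"
  shows "(\<Sum>a\<in>A. F (f a)) = real m *\<^sub>R (\<Sum>b\<in>f ` A. F b)"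
proof -
  have "(\<Sum>a\<in>A. F (f a)) = (\<Sum>b\<in>f ` A. \<Sum>a\<in>{a' \<in> A. f a' = b}. F (f a))"
    by (rule sum.image_gen) fact
  also have "\<dots> = (\<Sum>b\<in>f ` A. real m *\<^sub>R F b)"
  proof (rule sum.cong)
    fix b assume "b \<in> f ` A"
    then obtain a where "a \<in> A" "b = f a" by blast
    then show "(\<Sum>a\<in>{a' \<in> A. f a' = b}. F (f a)) = real m *\<^sub>R F b"
      using sum_constant_scaleR[of "F b" "{a' \<in> A. f a' = b}"] fibres by simp
  qed simp
  finally show ?thesis
    by (simp add: scaleR_sum_right)
qed

definition group_sum ::
  "(('n::finite \<Rightarrow> 'n) \<Rightarrow> complex^'n \<Rightarrow> complex^'n \<Rightarrow> 'w::ab_group_add) \<Rightarrow>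
   (('n \<Rightarrow> 'n) \<Rightarrow> complex^'n \<Rightarrow> complex^'n \<Rightarrow> complex^'n) \<Rightarrow>
   ('n \<Rightarrow> 'n) set \<Rightarrow> ('n \<Rightarrow> 'n) \<Rightarrow> ('n \<Rightarrow> 'n) \<Rightarrow> 'n \<Rightarrow> 'n \<Rightarrow> 'n \<Rightarrow> 'w" where
  "group_sum a b G x y i j k =
     (\<Sum>u\<in>G. phi a b (u \<circ> x \<circ> inv u) (u \<circ> y \<circ> inv u) (basis_vec i) (basis_vec j) (basis_vec k))"

lemma group_sum_eq_stabiliser_scaled_orbit_sum:
  fixes \<alpha> :: "('n::finite \<Rightarrow> 'n) \<Rightarrow> complex^'n \<Rightarrow> complex^'n \<Rightarrow> 'w::real_vector"
  assumes G: "is_subgroup_Sn G"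
  shows "group_sum \<alpha> \<beta> G x y i j k
    = real (card {u \<in> G. (u \<circ> x \<circ> inv u, u \<circ> y \<circ> inv u) = (x, y)}) *\<^sub>R orbit_sum \<alpha> \<beta> G x y i j k"
proof -
  define cp where "cp u = (u \<circ> x \<circ> inv u, u \<circ> y \<circ> inv u)" for u :: "'n \<Rightarrow> 'n"
  define Stab where "Stab = {u \<in> G. cp u = (x, y)}"
  have GS: "G \<subseteq> Sn" using G by (simp add: is_subgroup_Sn_def)
  have cp_compose: "cp (s \<circ> u) = (s \<circ> fst (cp u) \<circ> inv s, s \<circ> snd (cp u) \<circ> inv s)"
    if "s \<in> Sn" "u \<in> Sn" for s u
    using conj_compose[OF that] by (simp add: cp_def)
  have "card {u \<in> G. cp u = cp s} = card Stab" if s: "s \<in> G" for s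
  proof -
    have sS: "s \<in> Sn" using s GS by auto
    have "{u \<in> G. cp u = cp s} = (\<circ>) s ` Stab"
    proof (intro equalityI subsetI)
      fix w assume w: "w \<in> {u \<in> G. cp u = cp s}"
      then have wS: "w \<in> Sn" using GS by auto
      have "cp (inv s \<circ> w) = cp (inv s \<circ> s)"
        using w cp_compose[OF Sn_inv[OF sS] wS] cp_compose[OF Sn_inv[OF sS] sS] by simp
      then have "inv s \<circ> w \<in> Stab"
        using w G s by (simp add: Stab_def cp_def Sn_inverses(2)[OF sS] is_subgroup_Sn_def)
      moreover have "w = s \<circ> (inv s \<circ> w)"
        by (simp add: o_assoc Sn_inverses(1)[OF sS])
      ultimately show "w \<in> (\<circ>) s ` Stab" by blast
    next
      fix w assume "w \<in> (\<circ>) s ` Stab"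
      then obtain u where u: "u \<in> G" "cp u = (x, y)" "w = s \<circ> u"
        by (auto simp: Stab_def)
      then show "w \<in> {u \<in> G. cp u = cp s}"
        using G s cp_compose[OF sS, of u] GS by (auto simp: cp_def is_subgroup_Sn_def)
    qed
    then show ?thesis
      using card_image[OF inj_on_subset[OF inj_Sn_compose[OF sS], of Stab]] by simp
  qed
  moreover have "conj_pairs G x y = cp ` G"
    by (auto simp: conj_pairs_def cp_def)
  ultimately show ?thesis
    unfolding group_sum_def orbit_sum_def
    using sum_image_constant_fibres[of G cp "card Stab"
        "\<lambda>(x', y'). phi \<alpha> \<beta> x' y' (basis_vec i) (basis_vec j) (basis_vec k)"]
    by (simp add: cp_def Stab_def)
qed

lemma group_sum_eq_0_iff_orbit_sum_eq_0:
  fixes \<alpha> :: "('n::finite \<Rightarrow> 'n) \<Rightarrow> complex^'n \<Rightarrow> complex^'n \<Rightarrow> 'w::real_vector"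
  assumes G: "is_subgroup_Sn G"
  shows "group_sum \<alpha> \<beta> G x y i j k = 0 \<longleftrightarrow> orbit_sum \<alpha> \<beta> G x y i j k = 0"
proof -
  define m where "m = card {u \<in> G. (u \<circ> x \<circ> inv u, u \<circ> y \<circ> inv u) = (x, y)}"
  have "id \<in> {u \<in> G. (u \<circ> x \<circ> inv u, u \<circ> y \<circ> inv u) = (x, y)}"
    using G by (simp add: is_subgroup_Sn_def inv_id)
  then have "m \<noteq> 0"
    unfolding m_def by (simp only: card_0_eq[OF finite]) blast
  then show ?thesis
    unfolding group_sum_eq_stabiliser_scaled_orbit_sum[OF G] m_def[symmetric] by simp
qed

lemma group_sum_left_translate:
  fixes \<alpha> :: "('n::finite \<Rightarrow> 'n) \<Rightarrow> complex^'n \<Rightarrow> complex^'n \<Rightarrow> 'w::ab_group_add"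
  assumes \<alpha>: "invariant2 act \<alpha>" and \<beta>: "invariant_linear \<beta>" and act: "Modules.additive (act t)"
    and t: "t \<in> Sn" and U: "U \<subseteq> Sn" and x: "x \<in> Sn" and y: "y \<in> Sn"
  shows "group_sum \<alpha> \<beta> ((\<circ>) t ` U) x y (t a) (t b) (t c) = act t (group_sum \<alpha> \<beta> U x y a b c)"
proof -
  have "group_sum \<alpha> \<beta> ((\<circ>) t ` U) x y (t a) (t b) (t c)
    = (\<Sum>u\<in>U. phi \<alpha> \<beta> ((t \<circ> u) \<circ> x \<circ> inv (t \<circ> u)) ((t \<circ> u) \<circ> y \<circ> inv (t \<circ> u))
         (basis_vec (t a)) (basis_vec (t b)) (basis_vec (t c)))"
    by (simp add: group_sum_def sum.reindex inj_on_subset[OF inj_Sn_compose[OF t]])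
  also have "\<dots> = (\<Sum>u\<in>U. act t (phi \<alpha> \<beta> (u \<circ> x \<circ> inv u) (u \<circ> y \<circ> inv u)
         (basis_vec a) (basis_vec b) (basis_vec c)))"
  proof (rule sum.cong)
    fix u assume "u \<in> U"
    then have u: "u \<in> Sn" using U by auto
    show "phi \<alpha> \<beta> ((t \<circ> u) \<circ> x \<circ> inv (t \<circ> u)) ((t \<circ> u) \<circ> y \<circ> inv (t \<circ> u))
            (basis_vec (t a)) (basis_vec (t b)) (basis_vec (t c))
        = act t (phi \<alpha> \<beta> (u \<circ> x \<circ> inv u) (u \<circ> y \<circ> inv u) (basis_vec a) (basis_vec b) (basis_vec c))"
      unfolding conj_compose[OF t u] pact_basis_vec[OF t, symmetric]
      by (rule phi_conj[OF \<alpha> \<beta> act t Sn_conj[OF u x] Sn_conj[OF u y]])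
  qed simp
  also have "\<dots> = act t (group_sum \<alpha> \<beta> U x y a b c)"
    by (simp add: group_sum_def Modules.additive.sum[OF act])
  finally show ?thesis .
qed

lemma group_sum_eq_0_if_orbit_reps_vanish:
  fixes \<alpha> :: "('n::finite \<Rightarrow> 'n) \<Rightarrow> complex^'n \<Rightarrow> complex^'n \<Rightarrow> 'w::real_vector"
  assumes \<alpha>: "invariant2 act \<alpha>" and \<beta>: "invariant_linear \<beta>"
    and act: "\<And>t. t \<in> Sn \<Longrightarrow> Modules.additive (act t)"
    and x: "x \<in> Sn" and y: "y \<in> Sn" and H: "is_subgroup_Sn H" and R: "orbit_reps H R"
    and reps: "\<forall>i j k. distinct [i, j, k] \<and> {i, j, k} \<in> R \<longrightarrow> orbit_sum \<alpha> \<beta> H x y i j k = 0"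
    and abc: "distinct [a, b, c]"
  shows "group_sum \<alpha> \<beta> H x y a b c = 0"
proof -
  have "{a, b, c} \<in> triples"
    using abc by (simp add: triples_def)
  then have "\<exists>r. r \<in> R \<and> (\<exists>h\<in>H. {a, b, c} = h ` r)"
    by (rule ex1_implies_ex[OF bspec[OF conjunct2[OF R[unfolded orbit_reps_def]]]])
  then obtain r h where r: "r \<in> R" and h: "h \<in> H" and abc_r: "{a, b, c} = h ` r"
    by (elim exE conjE bexE)
  have hS: "h \<in> Sn" using h H by (auto simp: is_subgroup_Sn_def)
  define a' b' c' where "a' = inv h a" and "b' = inv h b" and "c' = inv h c"
  have abc': "a = h a'" "b = h b'" "c = h c'"
    by (simp_all add: a'_def b'_def c'_def Sn_inverses(3)[OF hS])
  have "h ` r = h ` {a', b', c'}"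
    using abc_r abc' by simp
  then have "r = {a', b', c'}"
    by (simp only: inj_image_eq_iff[OF bij_is_inj[OF Sn_inverses(6)[OF hS]]])
  moreover have "distinct [a', b', c']"
    using abc unfolding abc' by (auto simp only: distinct.simps list.set)
  ultimately have "orbit_sum \<alpha> \<beta> H x y a' b' c' = 0"
    using reps r by simp
  then have "group_sum \<alpha> \<beta> H x y a' b' c' = 0"
    by (simp only: group_sum_eq_0_iff_orbit_sum_eq_0[OF H])
  have "(\<circ>) h ` H = H"
    using bij_betw_imp_surj_on[OF subgroup_translate_bij(1)[OF H h]] .
  then have "group_sum \<alpha> \<beta> H x y a b c = group_sum \<alpha> \<beta> ((\<circ>) h ` H) x y (h a') (h b') (h c')"
    using abc' by simp
  also have "\<dots> = act h (group_sum \<alpha> \<beta> H x y a' b' c')"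
    using H by (intro group_sum_left_translate[OF \<alpha> \<beta> act[OF hS] hS _ x y])
      (simp add: is_subgroup_Sn_def)
  also have "\<dots> = 0"
    using \<open>group_sum \<alpha> \<beta> H x y a' b' c' = 0\<close> Modules.additive.zero[OF act[OF hS]]
    by (simp only:)
  finally show ?thesis .
qed

lemma orbit_sum_centralizer_eq_0:
  fixes \<alpha> :: "('n::finite \<Rightarrow> 'n) \<Rightarrow> complex^'n \<Rightarrow> complex^'n \<Rightarrow> 'w::real_vector"
  assumes \<alpha>: "invariant2 act \<alpha>" and \<beta>: "invariant_linear \<beta>"
    and act: "\<And>t. t \<in> Sn \<Longrightarrow> Modules.additive (act t)"
    and x: "x \<in> Sn" and y: "y \<in> Sn" and H: "is_subgroup_Sn H" and HZ: "H \<subseteq> centralizer g"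
    and R: "orbit_reps H R"
    and reps: "\<forall>i j k. distinct [i, j, k] \<and> {i, j, k} \<in> R \<longrightarrow> orbit_sum \<alpha> \<beta> H x y i j k = 0"
    and ijk: "distinct [i, j, k]"
  shows "orbit_sum \<alpha> \<beta> (centralizer g) x y i j k = 0"
proof -
  let ?Z = "centralizer g"
  have HS: "H \<subseteq> Sn" using H by (simp add: is_subgroup_Sn_def)
  have coset_sum: "group_sum \<alpha> \<beta> ((\<circ>) u ` H) x y i j k = 0" if "u \<in> ?Z" for u
  proof -
    have u: "u \<in> Sn" using that by (simp add: centralizer_def)
    have "distinct [inv u i, inv u j, inv u k]"
      using ijk bij_is_inj[OF Sn_inverses(6)[OF Sn_inv[OF u]]] by (auto dest: injD)
    then have "group_sum \<alpha> \<beta> H x y (inv u i) (inv u j) (inv u k) = 0"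
      using group_sum_eq_0_if_orbit_reps_vanish[OF \<alpha> \<beta> act x y H R reps] by blast
    then show ?thesis
      using group_sum_left_translate[OF \<alpha> \<beta> act[OF u] u HS x y, of "inv u i" "inv u j" "inv u k"]
        Modules.additive.zero[OF act[OF u]]
      unfolding Sn_inverses(3)[OF u] by (simp only:)
  qed
  have "real (card H) *\<^sub>R group_sum \<alpha> \<beta> ?Z x y i j k
    = (\<Sum>u\<in>?Z. group_sum \<alpha> \<beta> ((\<circ>) u ` H) x y i j k)"
    unfolding group_sum_def sum_subgroup_cosets[OF centralizer_subgroup H HZ]
  proof (rule sum.cong[OF refl])
    fix u assume "u \<in> ?Z"
    then have u: "u \<in> Sn" by (simp add: centralizer_def)
    show "(\<Sum>h\<in>H. phi \<alpha> \<beta> ((u \<circ> h) \<circ> x \<circ> inv (u \<circ> h)) ((u \<circ> h) \<circ> y \<circ> inv (u \<circ> h))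
            (basis_vec i) (basis_vec j) (basis_vec k))
      = (\<Sum>w\<in>(\<circ>) u ` H. phi \<alpha> \<beta> (w \<circ> x \<circ> inv w) (w \<circ> y \<circ> inv w)
            (basis_vec i) (basis_vec j) (basis_vec k))"
      by (simp add: sum.reindex inj_on_subset[OF inj_Sn_compose[OF u]])
  qed
  also have "\<dots> = 0"
    using coset_sum by (intro sum.neutral) blast
  finally have "group_sum \<alpha> \<beta> ?Z x y i j k = 0"
    using H by (auto simp: is_subgroup_Sn_def card_eq_0_iff)
  then show ?thesis
    by (simp only: group_sum_eq_0_iff_orbit_sum_eq_0[OF centralizer_subgroup])
qed

theorem lemma5p4:
  fixes \<beta> :: "('n::finite \<Rightarrow> 'n) \<Rightarrow> complex^'n \<Rightarrow> complex^'n \<Rightarrow> complex^'n"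
    and x y g :: "'n \<Rightarrow> 'n"
    and H :: "('n \<Rightarrow> 'n) set"
    and R :: "'n set set"
  assumes beta: "linear_cochain \<beta>" "invariant_linear \<beta>"
    and xy: "x \<in> Sn" "y \<in> Sn" "g = x \<circ> y"
    and H: "is_subgroup_Sn H" "H \<subseteq> centralizer g"
    and norm: "\<forall>k \<in> centralizer x \<inter> centralizer y. \<forall>h\<in>H. k \<circ> h \<circ> inv k \<in> H"
    and R: "orbit_reps H R"
  shows
   "(\<forall>\<alpha> :: ('n \<Rightarrow> 'n) \<Rightarrow> complex^'n \<Rightarrow> complex^'n \<Rightarrow> complex^'n.
       linear_cochain \<alpha> \<and> invariant_linear \<alpha> \<and>
       (\<forall>i j k. distinct [i, j, k] \<and> {i, j, k} \<in> R \<longrightarrow> orbit_sum \<alpha> \<beta> H x y i j k = 0)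
       \<longrightarrow> (\<forall>i j k. distinct [i, j, k] \<longrightarrow> orbit_sum \<alpha> \<beta> (centralizer g) x y i j k = 0))
    \<and>
    (\<forall>\<alpha> :: ('n \<Rightarrow> 'n) \<Rightarrow> complex^'n \<Rightarrow> complex^'n \<Rightarrow> complex.
       const_cochain \<alpha> \<and> invariant_const \<alpha> \<and>
       (\<forall>i j k. distinct [i, j, k] \<and> {i, j, k} \<in> R \<longrightarrow> orbit_sum \<alpha> \<beta> H x y i j k = 0)
       \<longrightarrow> (\<forall>i j k. distinct [i, j, k] \<longrightarrow> orbit_sum \<alpha> \<beta> (centralizer g) x y i j k = 0))"
proof (intro conjI allI impI)
  fix \<alpha> :: "('n \<Rightarrow> 'n) \<Rightarrow> complex^'n \<Rightarrow> complex^'n \<Rightarrow> complex^'n" and i j k :: 'n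
  assume "linear_cochain \<alpha> \<and> invariant_linear \<alpha> \<and>
    (\<forall>i j k. distinct [i, j, k] \<and> {i, j, k} \<in> R \<longrightarrow> orbit_sum \<alpha> \<beta> H x y i j k = 0)"
    and "distinct [i, j, k]"
  then show "orbit_sum \<alpha> \<beta> (centralizer g) x y i j k = 0"
    by (intro orbit_sum_centralizer_eq_0[where act=pact, OF _ beta(2) additive_pact xy(1,2) H R])
      (simp_all add: invariant_linear_def)
next
  fix \<alpha> :: "('n \<Rightarrow> 'n) \<Rightarrow> complex^'n \<Rightarrow> complex^'n \<Rightarrow> complex" and i j k :: 'n
  assume "const_cochain \<alpha> \<and> invariant_const \<alpha> \<and>
    (\<forall>i j k. distinct [i, j, k] \<and> {i, j, k} \<in> R \<longrightarrow> orbit_sum \<alpha> \<beta> H x y i j k = 0)"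
    and "distinct [i, j, k]"
  moreover have "Modules.additive (\<lambda>z::complex. z)"
    by unfold_locales simp
  ultimately show "orbit_sum \<alpha> \<beta> (centralizer g) x y i j k = 0"
    by (intro orbit_sum_centralizer_eq_0[where act="\<lambda>_ z. z", OF _ beta(2) _ xy(1,2) H R])
      (simp_all add: invariant_const_def)
qed

end
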